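(* For every protocol $\Pi$, there exists $(\mathsf C,j)\in\{\mathsf A,\mathsf B\}\times\mathbb N$ such that $\mathbb E_{\ell\leftarrow L_{\Pi_{(\mathsf C,j)}}}[M^{\mathsf C}_{\Pi_{(\mathsf C,j)}}(\ell)]=1$.
   Context: Protocols are $m$-round single-bit-message protocols $(\mathsf A,\mathsf B)$ identified with the complete binary tree of height $m$, with control scheme, edge probabilities $e_\Pi(u,ub)$, output $\chi_\Pi:\text{leaves}\to\{0,1\}$, visit probabilities $v_\Pi(u)$, leaf distribution $L_\Pi$; $\Pi_u$ is the subprotocol under $u$ (or $\perp$ if $v_\Pi(u)=0$); expectations over $L_\perp$ are $0$; $\mathbb E_{L_{\Pi_u}}[M]$ is the expectation of $M$ restricted to leaves under $u$. $\mathsf A$-dominated measure $M^{\mathsf A}_\Pi$: for a 0-round protocol with leaf $\ell$, $M^{\mathsf A}_\Pi(\ell)=\chi_\Pi(\ell)$; otherwise for a leaf with first bit $b$, with $\mu_c=\mathbb E_{L_{\Pi_c}}[M^{\mathsf A}_{\Pi_c}]$: value $0$ if $e_\Pi(\lambda,b)=0$; $M^{\mathsf A}_{\Pi_b}(\ell)$ if $e_\Pi(\lambda,b)=1$, or if $e_\Pi(\lambda,b)\in(0,1)$ and ($\mathsf A$ controls the root or $\mu_b\le\mu_{1-b}$); $\frac{\mu_{1-b}}{\mu_b}M^{\mathsf A}_{\Pi_b}(\ell)$ otherwise. $M^{\mathsf B}_\Pi$ is defined identically with $\mathsf A,\mathsf B$ exchanged and base case $1-\chi_\Pi(\ell)$;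 dominated measures of $\perp$ are zero. Conditional protocol: for $\mathbb E_{L_\Pi}[M]<1$, $\Pi|_M$ keeps control and output and has $e_{\Pi|_M}(u,ub)=0$ if $\mathbb E_{L_{\Pi_u}}[M]=1$, else $e_\Pi(u,ub)\frac{1-\mathbb E_{L_{\Pi_{ub}}}[M]}{1-\mathbb E_{L_{\Pi_u}}[M]}$; $\Pi|_M=\perp$ if $\mathbb E_{L_\Pi}[M]=1$ or $\Pi=\perp$. Sequence: $\Pi_{(\mathsf A,0)}=\Pi$, $\Pi_{(\mathsf B,j)}=\Pi_{(\mathsf A,j)}|_{M^{\mathsf A}_{\Pi_{(\mathsf A,j)}}}$, $\Pi_{(\mathsf A,j+1)}=\Pi_{(\mathsf B,j)}|_{M^{\mathsf B}_{\Pi_{(\mathsf B,j)}}}$. *)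

theory Defs
  imports Main "HOL.Real"
begin

text \<open>A protocol with single-bit messages; nodes of the complete binary tree of
height rounds are bit lists of length at most rounds (the root is the empty list).
ctrlA u = True means party A controls node u; edge u b is the probability e(u, ub);
out is the output function chi on leaves (lists of length rounds).\<close>

record proto =
  rounds :: nat
  ctrlA :: "bool list \<Rightarrow> bool"
  edge :: "bool list \<Rightarrow> bool \<Rightarrow> real"
  out :: "bool list \<Rightarrow> bool"

text \<open>Protocols with possible bottom: None stands for the empty protocol.\<close>
type_synonym protoo = "proto option"

definition valid_proto :: "proto \<Rightarrow> bool" where
  "valid_proto P \<longleftrightarrow> (\<forall>u b. length u < rounds P \<longrightarrow> 0 \<le> edge P u b) \<and>
     (\<forall>u. length u < rounds P \<longrightarrow> edge P u True + edge P u False = 1)"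

definition visit :: "proto \<Rightarrow> bool list \<Rightarrow> real" where
  "visit P u = (\<Prod>i<length u. edge P (take i u) (u ! i))"

definition leaves :: "proto \<Rightarrow> bool list set" where
  "leaves P = {l. length l = rounds P}"

fun expect :: "protoo \<Rightarrow> (bool list \<Rightarrow> real) \<Rightarrow> real" where
  "expect None M = 0"
| "expect (Some P) M = (\<Sum>l\<in>leaves P. visit P l * M l)"

definition shift :: "proto \<Rightarrow> bool list \<Rightarrow> proto" where
  "shift P u = \<lparr>rounds = rounds P - length u, ctrlA = (\<lambda>v. ctrlA P (u @ v)),
     edge = (\<lambda>v b. edge P (u @ v) b), out = (\<lambda>v. out P (u @ v))\<rparr>"

fun subp :: "protoo \<Rightarrow> bool list \<Rightarrow> protoo" where
  "subp None u = None"
| "subp (Some P) u = (if visit P u = 0 then None else Some (shift P u))"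

definition expect_under :: "protoo \<Rightarrow> bool list \<Rightarrow> (bool list \<Rightarrow> real) \<Rightarrow> real" where
  "expect_under P u M = expect (subp P u) (\<lambda>v. M (u @ v))"

text \<open>Dominated measure. The flag isA selects M^A (True) or M^B (False); the
nat argument is the number of rounds of the protocol (recursion parameter).\<close>
primrec domm :: "bool \<Rightarrow> nat \<Rightarrow> proto \<Rightarrow> bool list \<Rightarrow> real" where
  "domm isA 0 P l =
     (if isA then (if out P l then 1 else 0) else (if out P l then 0 else 1))"
| "domm isA (Suc n) P l =
     (let b = hd l;
          mu = (\<lambda>c. case subp (Some P) [c] of None \<Rightarrow> 0
                     | Some Q \<Rightarrow> expect (Some Q) (domm isA n Q));
          s = (case subp (Some P) [b] of None \<Rightarrow> 0
                 | Some Q \<Rightarrow> domm isA n Q (tl l));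
          e = edge P [] b
      in if e = 0 then 0
         else if e = 1 then s
         else if 0 < e \<and> e < 1 \<and> (ctrlA P [] = isA \<or> mu b \<le> mu (\<not> b)) then s
         else (mu (\<not> b) / mu b) * s)"

fun dom_meas :: "bool \<Rightarrow> protoo \<Rightarrow> bool list \<Rightarrow> real" where
  "dom_meas isA None = (\<lambda>_. 0)"
| "dom_meas isA (Some P) = domm isA (rounds P) P"

fun cond_proto :: "protoo \<Rightarrow> (bool list \<Rightarrow> real) \<Rightarrow> protoo" where
  "cond_proto None M = None"
| "cond_proto (Some P) M =
     (if expect (Some P) M = 1 then None
      else Some (P\<lparr>edge := (\<lambda>u b.
         if expect_under (Some P) u M = 1 then 0
         else edge P u b * (1 - expect_under (Some P) (u @ [b]) M)
                / (1 - expect_under (Some P) u M))\<rparr>))"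

definition condA :: "protoo \<Rightarrow> protoo" where
  "condA X = cond_proto X (dom_meas True X)"

definition condB :: "protoo \<Rightarrow> protoo" where
  "condB X = cond_proto X (dom_meas False X)"

primrec seqA :: "protoo \<Rightarrow> nat \<Rightarrow> protoo" where
  "seqA P 0 = P"
| "seqA P (Suc j) = condB (condA (seqA P j))"

definition seqB :: "protoo \<Rightarrow> nat \<Rightarrow> protoo" where
  "seqB P j = condA (seqA P j)"

end

theory Submission
  imports Defs
begin

text \<open>Conditioning on a measure M with values in [0,1] multiplies the probability of every leaf l
by (1 - M l) / (1 - E M). So it removes from the support exactly the leaves where M = 1, and it
changes nothing when E M = 0. A dominated measure with positive expectation equals 1 on some leaf
of the support: by the choice of the factors, whenever a node carries positive mass, some child of
positive mean has factor 1. By the same case analysis at the root, at least one of M^A, M^B has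
positive expectation. Hence, as long as no expectation of the sequence equals 1, each passage
from (A,j) to (A,j+1) removes a leaf from the finite support: one with M^A = 1, or, when E M^A = 0
and so the protocol is unchanged, one with M^B = 1.\<close>

text \<open>Conditioning sets both edges of a node to 0 once the conditional mass below it vanishes, so
conditional protocols are stochastic only at the nodes they reach with nonzero probability.\<close>

definition valid_reachable :: "proto \<Rightarrow> bool" where
  "valid_reachable P \<longleftrightarrow> (\<forall>u b. length u < rounds P \<longrightarrow> 0 \<le> edge P u b) \<and>
     (\<forall>u. length u < rounds P \<longrightarrow> visit P u \<noteq> 0 \<longrightarrow> edge P u True + edge P u False = 1)"

definition support :: "proto \<Rightarrow> bool list set" where
  "support P = {l \<in> leaves P. 0 < visit P l}"

lemma valid_proto_imp_valid_reachable: "valid_proto P \<Longrightarrow> valid_reachable P"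
  by (auto simp: valid_proto_def valid_reachable_def)

lemma shift_simps[simp]:
  "rounds (shift P u) = rounds P - length u"
  "edge (shift P u) v b = edge P (u @ v) b"
  "ctrlA (shift P u) v = ctrlA P (u @ v)"
  "out (shift P u) v = out P (u @ v)"
  by (simp_all add: shift_def)

lemma shift_shift[simp]: "shift (shift P u) v = shift P (u @ v)"
  by (simp add: shift_def diff_diff_left)

lemma shift_Nil[simp]: "shift P [] = P"
  by (cases P) (simp add: shift_def)

lemma visit_Nil[simp]: "visit P [] = 1"
  by (simp add: visit_def)

lemma visit_snoc: "visit P (u @ [b]) = visit P u * edge P u b"
proof -
  have "visit P (u @ [b]) = (\<Prod>i<length u. edge P (take i (u @ [b])) ((u @ [b]) ! i)) * edge P u b"
    by (simp add: visit_def prod.lessThan_Suc)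
  also have "(\<Prod>i<length u. edge P (take i (u @ [b])) ((u @ [b]) ! i)) = visit P u"
    unfolding visit_def by (rule prod.cong) (auto simp: nth_append)
  finally show ?thesis .
qed

lemma visit_append: "visit P (u @ v) = visit P u * visit (shift P u) v"
proof (induction v rule: rev_induct)
  case (snoc b v)
  have "visit P (u @ v @ [b]) = visit P (u @ v) * edge P (u @ v) b"
    using visit_snoc[of P "u @ v" b] by simp
  then show ?case using snoc by (simp add: visit_snoc)
qed simp

lemma visit_single[simp]: "visit P [c] = edge P [] c"
  using visit_snoc[of P "[]" c] by simp

lemma visit_Cons: "visit P (c # v) = edge P [] c * visit (shift P [c]) v"
  using visit_append[of P "[c]" v] by simp

lemma visit_nonneg: "valid_reachable P \<Longrightarrow> length u \<le> rounds P \<Longrightarrow> 0 \<le> visit P u"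
  unfolding visit_def by (rule prod_nonneg) (auto simp: valid_reachable_def)

lemma valid_reachable_root:
  assumes "valid_reachable P" "0 < rounds P"
  shows "edge P [] c + edge P [] (\<not> c) = 1" "0 \<le> edge P [] c" "edge P [] c \<le> 1"
proof -
  have "edge P [] True + edge P [] False = 1" "0 \<le> edge P [] True" "0 \<le> edge P [] False"
    using assms by (auto simp: valid_reachable_def)
  then show "edge P [] c + edge P [] (\<not> c) = 1" "0 \<le> edge P [] c" "edge P [] c \<le> 1"
    by (cases c; simp)+
qed

lemma valid_reachable_edge_pos:
  "valid_reachable P \<Longrightarrow> 0 < rounds P \<Longrightarrow> edge P [] c \<noteq> 0 \<Longrightarrow> 0 < edge P [] c"
  using valid_reachable_root(2)[of P c] by simp

lemma valid_reachable_shift: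
  assumes "valid_reachable P" "visit P u \<noteq> 0"
  shows "valid_reachable (shift P u)"
  unfolding valid_reachable_def
proof (intro conjI allI impI)
  fix v :: "bool list" and b
  assume "length v < rounds (shift P u)"
  then show "0 \<le> edge (shift P u) v b"
    using assms by (auto simp: valid_reachable_def)
next
  fix v :: "bool list"
  assume "length v < rounds (shift P u)" "visit (shift P u) v \<noteq> 0"
  then have "visit P (u @ v) \<noteq> 0" "length (u @ v) < rounds P"
    using assms by (auto simp: visit_append)
  then show "edge (shift P u) v True + edge (shift P u) v False = 1"
    using assms by (auto simp: valid_reachable_def)
qed

lemma valid_reachable_child:
  "valid_reachable P \<Longrightarrow> edge P [] c \<noteq> 0 \<Longrightarrow> valid_reachable (shift P [c])"
  using valid_reachable_shift[of P "[c]"] by simp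

lemma finite_bool_lists_length: "finite {v :: bool list. length v = n}"
  using finite_lists_length_eq[of "UNIV :: bool set" n] by simp

lemma finite_leaves[simp]: "finite (leaves P)"
  by (simp add: leaves_def finite_bool_lists_length)

lemma finite_support: "finite (support P)"
  by (simp add: support_def)

lemma leaves_0: "rounds P = 0 \<Longrightarrow> leaves P = {[]}"
  by (auto simp: leaves_def)

lemma leaves_Suc:
  assumes "rounds P = Suc n"
  shows "leaves P = Cons True ` {v. length v = n} \<union> Cons False ` {v. length v = n}"
proof -
  have "l \<in> Cons True ` {v. length v = n} \<union> Cons False ` {v. length v = n}"
    if "length l = Suc n" for l :: "bool list"
    using that by (cases l) (auto simp: image_iff)
  then show ?thesis using assms by (auto simp: leaves_def)
qed

lemma expect_rounds_0: "rounds P = 0 \<Longrightarrow> expect (Some P) M = M []"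
  by (simp add: leaves_0)

lemma expect_Suc:
  assumes "rounds P = Suc n"
  shows "expect (Some P) M =
    edge P [] c * expect (Some (shift P [c])) (\<lambda>v. M (c # v)) +
    edge P [] (\<not> c) * expect (Some (shift P [\<not> c])) (\<lambda>v. M ((\<not> c) # v))"
proof -
  let ?L = "{v :: bool list. length v = n}"
  have part: "(\<Sum>l\<in>Cons d ` ?L. visit P l * M l) =
      edge P [] d * expect (Some (shift P [d])) (\<lambda>v. M (d # v))" for d
    using assms by (simp add: sum.reindex leaves_def visit_Cons sum_distrib_left mult.assoc)
  have "expect (Some P) M =
      (\<Sum>l\<in>Cons True ` ?L. visit P l * M l) + (\<Sum>l\<in>Cons False ` ?L. visit P l * M l)"
    unfolding expect.simps leaves_Suc[OF assms]
    by (rule sum.union_disjoint) (auto simp: finite_bool_lists_length)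
  then show ?thesis unfolding part by (cases c) simp_all
qed

lemma expect_mono:
  assumes "valid_reachable P" "\<And>l. length l = rounds P \<Longrightarrow> M l \<le> N l"
  shows "expect (Some P) M \<le> expect (Some P) N"
  using assms by (auto simp: leaves_def intro!: sum_mono mult_left_mono visit_nonneg)

lemma expect_nonneg:
  "valid_reachable P \<Longrightarrow> (\<And>l. length l = rounds P \<Longrightarrow> 0 \<le> M l) \<Longrightarrow> 0 \<le> expect (Some P) M"
  using expect_mono[of P "\<lambda>_. 0" M] by simp

lemma expect_scale: "expect (Some P) (\<lambda>l. k * M l) = k * expect (Some P) M"
  by (simp add: sum_distrib_left mult.left_commute)

lemma expect_const_one: "valid_reachable P \<Longrightarrow> expect (Some P) (\<lambda>_. 1) = 1"
proof (induction "rounds P" arbitrary: P)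
  case 0
  then show ?case by (simp add: leaves_0)
next
  case (Suc n)
  have child: "edge P [] c * expect (Some (shift P [c])) (\<lambda>_. 1) = edge P [] c" for c
    using Suc.hyps Suc.prems valid_reachable_child[OF Suc.prems, of c]
    by (cases "edge P [] c = 0") simp_all
  have "expect (Some P) (\<lambda>_. 1) = edge P [] True + edge P [] False"
    using expect_Suc[OF Suc.hyps(2)[symmetric], of "\<lambda>_. 1" True]
    by (simp only: child not_True_eq_False)
  then show ?case
    using valid_reachable_root(1)[OF Suc.prems, of True] Suc.hyps(2) by simp
qed

declare expect.simps(2)[simp del]

definition dom_mean :: "bool \<Rightarrow> nat \<Rightarrow> proto \<Rightarrow> bool \<Rightarrow> real" where
  "dom_mean isA n P c = (if edge P [] c = 0 then 0
      else expect (Some (shift P [c])) (domm isA n (shift P [c])))"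

definition dom_factor :: "bool \<Rightarrow> nat \<Rightarrow> proto \<Rightarrow> bool \<Rightarrow> real" where
  "dom_factor isA n P c = (if edge P [] c = 0 then 0 else if edge P [] c = 1 then 1
     else if 0 < edge P [] c \<and> edge P [] c < 1 \<and>
       (ctrlA P [] = isA \<or> dom_mean isA n P c \<le> dom_mean isA n P (\<not> c)) then 1
     else dom_mean isA n P (\<not> c) / dom_mean isA n P c)"

lemma domm_Cons:
  "domm isA (Suc n) P (c # v) = dom_factor isA n P c * domm isA n (shift P [c]) v"
proof -
  have mean: "(\<lambda>c. case subp (Some P) [c] of None \<Rightarrow> 0
      | Some Q \<Rightarrow> expect (Some Q) (domm isA n Q)) = dom_mean isA n P"
    by (simp add: dom_mean_def fun_eq_iff)
  show ?thesis
    unfolding domm.simps(2) Let_def mean by (auto simp: dom_factor_def)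
qed

declare domm.simps(2)[simp del]

lemma dom_factor_eq_one:
  "0 < edge P [] c \<Longrightarrow> edge P [] c \<le> 1 \<Longrightarrow>
    edge P [] c = 1 \<or> ctrlA P [] = isA \<or> dom_mean isA n P c \<le> dom_mean isA n P (\<not> c) \<Longrightarrow>
    dom_factor isA n P c = 1"
  by (auto simp: dom_factor_def)

lemma dom_factor_bounds:
  assumes "\<And>d. 0 \<le> dom_mean isA n P d" "0 \<le> edge P [] c" "edge P [] c \<le> 1"
  shows "0 \<le> dom_factor isA n P c" "dom_factor isA n P c \<le> 1"
  using assms(1)[of c] assms(1)[of "\<not> c"] assms(2,3)
  by (auto simp: dom_factor_def divide_le_eq_1 intro: divide_nonneg_nonneg)

lemma domm_bounds:
  "valid_reachable P \<Longrightarrow> rounds P = n \<Longrightarrow> length l = n \<Longrightarrow>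
    0 \<le> domm isA n P l \<and> domm isA n P l \<le> 1"
proof (induction n arbitrary: P l)
  case 0
  then show ?case by simp
next
  case (Suc n)
  obtain c v where l: "l = c # v" using Suc.prems(3) by (cases l) auto
  have child: "0 \<le> domm isA n (shift P [d]) w \<and> domm isA n (shift P [d]) w \<le> 1"
    if "edge P [] d \<noteq> 0" "length w = n" for d w
    using Suc.IH[OF valid_reachable_child[OF Suc.prems(1) that(1)]] Suc.prems(2) that(2) by simp
  have "0 \<le> dom_mean isA n P d" for d
    using child Suc.prems(2)
    by (auto simp: dom_mean_def intro!: expect_nonneg valid_reachable_child[OF Suc.prems(1)])
  then have "0 \<le> dom_factor isA n P c \<and> dom_factor isA n P c \<le> 1"
    using dom_factor_bounds valid_reachable_root[OF Suc.prems(1)] Suc.prems(2) by simp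
  then show ?case
    using child[of c v] Suc.prems(3) l
    by (cases "edge P [] c = 0") (simp_all add: domm_Cons dom_factor_def mult_le_one)
qed

lemma dom_mean_nonneg:
  assumes "valid_reachable P" "rounds P = Suc n"
  shows "0 \<le> dom_mean isA n P c"
  using assms domm_bounds[OF valid_reachable_child[OF assms(1)]]
  by (auto simp: dom_mean_def intro!: expect_nonneg valid_reachable_child[OF assms(1)])

lemma expect_domm_Suc:
  assumes "rounds P = Suc n"
  shows "expect (Some P) (domm isA (Suc n) P) =
    edge P [] c * dom_factor isA n P c * dom_mean isA n P c +
    edge P [] (\<not> c) * dom_factor isA n P (\<not> c) * dom_mean isA n P (\<not> c)"
proof -
  have child: "edge P [] d * expect (Some (shift P [d])) (\<lambda>v. domm isA (Suc n) P (d # v)) =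
      edge P [] d * dom_factor isA n P d * dom_mean isA n P d" for d
    by (simp add: domm_Cons expect_scale dom_mean_def)
  show ?thesis
    using expect_Suc[OF assms, of "domm isA (Suc n) P" c] unfolding child .
qed

lemma dom_term_le_expect:
  assumes "valid_reachable P" "rounds P = Suc n"
  shows "edge P [] c * dom_factor isA n P c * dom_mean isA n P c
    \<le> expect (Some P) (domm isA (Suc n) P)"
proof -
  have "0 \<le> edge P [] (\<not> c) * dom_factor isA n P (\<not> c) * dom_mean isA n P (\<not> c)"
    using valid_reachable_root[OF assms(1)] dom_mean_nonneg[OF assms]
      dom_factor_bounds(1)[OF dom_mean_nonneg[OF assms]] assms(2)
    by simp
  then show ?thesis
    using expect_domm_Suc[OF assms(2), of isA c] by simp
qed

lemma dom_factor_one_child: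
  assumes "valid_reachable P" "rounds P = Suc n"
    and "0 < edge P [] c * dom_factor isA n P c * dom_mean isA n P c"
  shows "\<exists>d. dom_factor isA n P d = 1 \<and> 0 < dom_mean isA n P d"
proof -
  have root: "0 \<le> edge P [] c" "edge P [] c \<le> 1" "edge P [] c + edge P [] (\<not> c) = 1"
    using valid_reachable_root[OF assms(1)] assms(2) by auto
  have "0 \<le> dom_factor isA n P c" "0 \<le> dom_mean isA n P c"
    using dom_factor_bounds(1) dom_mean_nonneg[OF assms(1,2)] root by auto
  with assms(3) root have pos: "0 < edge P [] c" "0 < dom_mean isA n P c"
    by (auto simp: zero_less_mult_iff)
  show ?thesis
  proof (cases "dom_factor isA n P c = 1")
    case True
    with pos show ?thesis by blast
  next
    case False
    then have not_one:
      "\<not> (edge P [] c = 1 \<or> ctrlA P [] = isA \<or> dom_mean isA n P c \<le> dom_mean isA n P (\<not> c))"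
      using dom_factor_eq_one[of P c isA n] pos(1) root(2) by blast
    then have "edge P [] c < 1" "\<not> dom_mean isA n P c \<le> dom_mean isA n P (\<not> c)"
      using root(2) by auto
    moreover have ratio: "dom_factor isA n P c = dom_mean isA n P (\<not> c) / dom_mean isA n P c"
      using not_one pos(1) by (simp add: dom_factor_def)
    moreover have "0 < dom_mean isA n P (\<not> c)"
      using assms(3) pos ratio by (simp add: zero_less_mult_iff zero_less_divide_iff)
    ultimately have "dom_factor isA n P (\<not> c) = 1 \<and> 0 < dom_mean isA n P (\<not> c)"
      using dom_factor_eq_one[of P "\<not> c" isA n] root by simp
    then show ?thesis by blast
  qed
qed

lemma domm_eq_one_on_support:
  "valid_reachable P \<Longrightarrow> rounds P = n \<Longrightarrow> 0 < expect (Some P) (domm isA n P) \<Longrightarrow>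
    \<exists>l\<in>support P. domm isA n P l = 1"
proof (induction n arbitrary: P)
  case 0
  then have "0 < domm isA 0 P []" by (simp add: expect_rounds_0)
  then have "domm isA 0 P [] = 1" by (simp split: if_splits)
  then show ?case using 0 by (auto simp: support_def leaves_0)
next
  case (Suc n)
  have "0 < edge P [] True * dom_factor isA n P True * dom_mean isA n P True \<or>
      0 < edge P [] False * dom_factor isA n P False * dom_mean isA n P False"
    using expect_domm_Suc[OF Suc.prems(2), of isA True] Suc.prems(3) by auto
  then obtain d where d: "dom_factor isA n P d = 1" "0 < dom_mean isA n P d"
    using dom_factor_one_child[OF Suc.prems(1,2)] by blast
  then have edge: "edge P [] d \<noteq> 0" by (auto simp: dom_mean_def)
  then have "0 < expect (Some (shift P [d])) (domm isA n (shift P [d]))"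
    using d(2) by (simp add: dom_mean_def)
  then obtain v where v: "v \<in> support (shift P [d])" "domm isA n (shift P [d]) v = 1"
    using Suc.IH[OF valid_reachable_child[OF Suc.prems(1) edge]] Suc.prems(2) by auto
  have "0 < edge P [] d"
    using valid_reachable_edge_pos[OF Suc.prems(1) _ edge] Suc.prems(2) by simp
  then have "d # v \<in> support P"
    using v(1) Suc.prems(2) by (simp add: support_def leaves_def visit_Cons)
  moreover have "domm isA (Suc n) P (d # v) = 1"
    using d(1) v(2) by (simp add: domm_Cons)
  ultimately show ?case by blast
qed

lemma dom_factor_one_some_player:
  assumes "valid_reachable P" "rounds P = Suc n"
    and mean: "\<And>d. edge P [] d \<noteq> 0 \<Longrightarrow> 0 < dom_mean True n P d \<or> 0 < dom_mean False n P d"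
  shows "\<exists>isA d. dom_factor isA n P d = 1 \<and> 0 < dom_mean isA n P d"
proof -
  have root: "0 \<le> edge P [] d" "edge P [] d \<le> 1" "edge P [] d + edge P [] (\<not> d) = 1" for d
    using valid_reachable_root[OF assms(1)] assms(2) by auto
  define k where "k = ctrlA P []"
  show ?thesis
  proof (cases "\<exists>d. 0 < edge P [] d \<and> 0 < dom_mean k n P d")
    case True
    then show ?thesis
      using dom_factor_eq_one[of P _ k n] root unfolding k_def by blast
  next
    case False
    \<comment> \<open>All of the controlling party's means vanish, so the other party's means are
      positive on both children of nonzero probability; its factor is 1 on a smaller one.\<close>
    have other: "0 < dom_mean (\<not> k) n P d" if "0 < edge P [] d" for d
      using mean[of d] False that by (cases k) auto
    obtain d0 where d0: "dom_mean (\<not> k) n P d0 \<le> dom_mean (\<not> k) n P (\<not> d0)"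
      by (cases "dom_mean (\<not> k) n P True \<le> dom_mean (\<not> k) n P False")
        (use that[of True] that[of False] in auto)
    show ?thesis
    proof (cases "edge P [] d0 = 0")
      case True
      then have "edge P [] (\<not> d0) = 1" using root(3)[of d0] by simp
      then show ?thesis
        using dom_factor_eq_one[of P "\<not> d0" "\<not> k" n] other[of "\<not> d0"] by auto
    next
      case False
      then have "0 < edge P [] d0" using root(1)[of d0] by simp
      then show ?thesis
        using dom_factor_eq_one[of P d0 "\<not> k" n] other[of d0] d0 root(2)[of d0] by auto
    qed
  qed
qed

lemma expect_domm_pos:
  "valid_reachable P \<Longrightarrow> rounds P = n \<Longrightarrow>
    0 < expect (Some P) (domm True n P) \<or> 0 < expect (Some P) (domm False n P)"
proof (induction n arbitrary: P)
  case 0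
  then show ?case by (simp add: expect_rounds_0)
next
  case (Suc n)
  have "0 < dom_mean True n P d \<or> 0 < dom_mean False n P d" if "edge P [] d \<noteq> 0" for d
    using Suc.IH[OF valid_reachable_child[OF Suc.prems(1) that]] Suc.prems(2) that
    by (simp add: dom_mean_def)
  then obtain isA d where d: "dom_factor isA n P d = 1" "0 < dom_mean isA n P d"
    using dom_factor_one_some_player[OF Suc.prems(1,2)] by blast
  then have "0 < edge P [] d"
    using valid_reachable_edge_pos[OF Suc.prems(1)] Suc.prems(2) by (simp add: dom_mean_def split: if_splits)
  with d have "0 < edge P [] d * dom_factor isA n P d * dom_mean isA n P d" by simp
  then have "0 < expect (Some P) (domm isA (Suc n) P)"
    using dom_term_le_expect[OF Suc.prems(1,2)] by (rule less_le_trans)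
  then show ?case by (cases isA) simp_all
qed

definition cond_edge :: "proto \<Rightarrow> (bool list \<Rightarrow> real) \<Rightarrow> bool list \<Rightarrow> bool \<Rightarrow> real" where
  "cond_edge P M = (\<lambda>u b.
     if expect_under (Some P) u M = 1 then 0
     else edge P u b * (1 - expect_under (Some P) (u @ [b]) M) / (1 - expect_under (Some P) u M))"

lemma cond_proto_Some:
  "expect (Some P) M \<noteq> 1 \<Longrightarrow> cond_proto (Some P) M = Some (P\<lparr>edge := cond_edge P M\<rparr>)"
  unfolding cond_edge_def by simp

definition unit_bounded :: "proto \<Rightarrow> (bool list \<Rightarrow> real) \<Rightarrow> bool" where
  "unit_bounded P M \<longleftrightarrow> (\<forall>l. length l = rounds P \<longrightarrow> 0 \<le> M l \<and> M l \<le> 1)"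

lemma expect_under_unvisited: "visit P u = 0 \<Longrightarrow> expect_under (Some P) u M = 0"
  by (simp add: expect_under_def)

lemma expect_under_visited:
  "visit P u \<noteq> 0 \<Longrightarrow> expect_under (Some P) u M = expect (Some (shift P u)) (\<lambda>v. M (u @ v))"
  by (simp add: expect_under_def)

lemma expect_under_Nil[simp]: "expect_under (Some P) [] M = expect (Some P) M"
  by (simp add: expect_under_def)

lemma expect_under_leaf:
  "length u = rounds P \<Longrightarrow> expect_under (Some P) u M = (if visit P u = 0 then 0 else M u)"
  by (simp add: expect_under_unvisited expect_under_visited expect_rounds_0)

lemma expect_under_split:
  assumes "length u < rounds P"
  shows "expect_under (Some P) u M = edge P u True * expect_under (Some P) (u @ [True]) M
     + edge P u False * expect_under (Some P) (u @ [False]) M"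
proof (cases "visit P u = 0")
  case True
  then show ?thesis by (simp add: expect_under_unvisited visit_snoc)
next
  case False
  have rounds: "rounds (shift P u) = Suc (rounds P - length u - 1)" using assms by simp
  have child: "edge (shift P u) [] c * expect (Some (shift (shift P u) [c])) (\<lambda>v. M (u @ c # v)) =
      edge P u c * expect_under (Some P) (u @ [c]) M" for c
    using False by (cases "edge P u c = 0") (simp_all add: expect_under_visited visit_snoc)
  show ?thesis
    using expect_Suc[OF rounds, of "\<lambda>v. M (u @ v)" True]
    unfolding expect_under_visited[OF False] child by simp
qed

lemma expect_under_bounds:
  assumes "valid_reachable P" "unit_bounded P M" "length u \<le> rounds P"
  shows "0 \<le> expect_under (Some P) u M \<and> expect_under (Some P) u M \<le> 1"
proof (cases "visit P u = 0")
  case False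
  have valid: "valid_reachable (shift P u)" using valid_reachable_shift[OF assms(1) False] .
  have "0 \<le> expect (Some (shift P u)) (\<lambda>v. M (u @ v))"
    by (rule expect_nonneg[OF valid]) (use assms in \<open>auto simp: unit_bounded_def\<close>)
  moreover have "expect (Some (shift P u)) (\<lambda>v. M (u @ v)) \<le> expect (Some (shift P u)) (\<lambda>_. 1)"
    by (rule expect_mono[OF valid]) (use assms in \<open>auto simp: unit_bounded_def\<close>)
  ultimately show ?thesis
    using False expect_const_one[OF valid] by (simp add: expect_under_visited)
qed (simp add: expect_under_unvisited)

lemma expect_le_one: "valid_reachable P \<Longrightarrow> unit_bounded P M \<Longrightarrow> expect (Some P) M \<le> 1"
  using expect_under_bounds[of P M "[]"] by simp

lemma one_minus_expect_under_split:
  assumes "valid_reachable P" "length u < rounds P" "visit P u \<noteq> 0"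
  shows "1 - expect_under (Some P) u M =
    edge P u True * (1 - expect_under (Some P) (u @ [True]) M) +
    edge P u False * (1 - expect_under (Some P) (u @ [False]) M)"
proof -
  have "edge P u True + edge P u False = 1" using assms by (auto simp: valid_reachable_def)
  then show ?thesis using expect_under_split[OF assms(2), of M] by (simp add: algebra_simps)
qed

lemma edge_expect_under_eq_zero:
  assumes "valid_reachable P" "unit_bounded P M" "length u < rounds P"
    and "expect_under (Some P) u M = 0"
  shows "edge P u b * expect_under (Some P) (u @ [b]) M = 0"
proof -
  have "0 \<le> edge P u d * expect_under (Some P) (u @ [d]) M" for d
    using assms(1,3) expect_under_bounds[OF assms(1,2), of "u @ [d]"]
    by (auto simp: valid_reachable_def)
  moreover have "edge P u True * expect_under (Some P) (u @ [True]) M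
      + edge P u False * expect_under (Some P) (u @ [False]) M = 0"
    using expect_under_split[OF assms(3), of M] assms(4) by simp
  ultimately show ?thesis by (cases b) (simp_all add: add_nonneg_eq_0_iff)
qed

lemma edge_expect_under_eq_one:
  assumes "valid_reachable P" "unit_bounded P M" "length u < rounds P" "visit P u \<noteq> 0"
    and "expect_under (Some P) u M = 1"
  shows "edge P u b * (1 - expect_under (Some P) (u @ [b]) M) = 0"
proof -
  have "0 \<le> edge P u d * (1 - expect_under (Some P) (u @ [d]) M)" for d
    using assms(1,3) expect_under_bounds[OF assms(1,2), of "u @ [d]"]
    by (auto simp: valid_reachable_def)
  moreover have "edge P u True * (1 - expect_under (Some P) (u @ [True]) M)
      + edge P u False * (1 - expect_under (Some P) (u @ [False]) M) = 0"
    using one_minus_expect_under_split[OF assms(1,3,4), of M] assms(5) by simp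
  ultimately show ?thesis by (cases b) (simp_all add: add_nonneg_eq_0_iff)
qed

lemma visit_cond_edge:
  assumes "valid_reachable P" "unit_bounded P M"
  shows "length u \<le> rounds P \<Longrightarrow>
    visit (P\<lparr>edge := cond_edge P M\<rparr>) u * (1 - expect (Some P) M) =
    visit P u * (1 - expect_under (Some P) u M)"
proof (induction u rule: rev_induct)
  case (snoc b u)
  let ?F = "\<lambda>u. expect_under (Some P) u M"
  have u: "length u < rounds P" using snoc.prems by simp
  show ?case
  proof (cases "?F u = 1")
    case True
    then have "visit P u * (edge P u b * (1 - ?F (u @ [b]))) = 0"
      using edge_expect_under_eq_one[OF assms u] by (cases "visit P u = 0") simp_all
    then show ?thesis using True by (simp add: visit_snoc cond_edge_def)
  next
    case False
    then have edge: "cond_edge P M u b = edge P u b * (1 - ?F (u @ [b])) / (1 - ?F u)"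
      by (simp add: cond_edge_def)
    have "visit (P\<lparr>edge := cond_edge P M\<rparr>) (u @ [b]) * (1 - expect (Some P) M) =
        visit (P\<lparr>edge := cond_edge P M\<rparr>) u * (1 - expect (Some P) M) * cond_edge P M u b"
      by (simp add: visit_snoc)
    also have "\<dots> = visit P u * (1 - ?F u) * (edge P u b * (1 - ?F (u @ [b])) / (1 - ?F u))"
      using u by (simp only: snoc.IH edge less_imp_le)
    also have "\<dots> = visit P (u @ [b]) * (1 - ?F (u @ [b]))"
      using False by (simp add: visit_snoc)
    finally show ?thesis .
  qed
qed simp

lemma valid_reachable_cond_edge:
  assumes valid: "valid_reachable P" and bounded: "unit_bounded P M"
    and "expect (Some P) M \<noteq> 1"
  shows "valid_reachable (P\<lparr>edge := cond_edge P M\<rparr>)"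
  unfolding valid_reachable_def
proof (intro conjI allI impI)
  let ?F = "\<lambda>u. expect_under (Some P) u M"
  fix u :: "bool list" and b
  assume "length u < rounds (P\<lparr>edge := cond_edge P M\<rparr>)"
  then show "0 \<le> edge (P\<lparr>edge := cond_edge P M\<rparr>) u b"
    using expect_under_bounds[OF valid bounded, of "u @ [b]"]
      expect_under_bounds[OF valid bounded, of u] valid
    by (auto simp: cond_edge_def valid_reachable_def intro!: divide_nonneg_nonneg)
next
  let ?F = "\<lambda>u. expect_under (Some P) u M"
  fix u :: "bool list"
  assume u: "length u < rounds (P\<lparr>edge := cond_edge P M\<rparr>)"
    and visited: "visit (P\<lparr>edge := cond_edge P M\<rparr>) u \<noteq> 0"
  have "visit P u * (1 - ?F u) = visit (P\<lparr>edge := cond_edge P M\<rparr>) u * (1 - expect (Some P) M)"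
    using visit_cond_edge[OF valid bounded, of u] u by simp
  also have "\<dots> \<noteq> 0"
    using visited assms(3) by simp
  finally have "visit P u * (1 - ?F u) \<noteq> 0" .
  then have "visit P u \<noteq> 0" "1 - ?F u \<noteq> 0" by auto
  then show "edge (P\<lparr>edge := cond_edge P M\<rparr>) u True + edge (P\<lparr>edge := cond_edge P M\<rparr>) u False = 1"
    using one_minus_expect_under_split[OF valid _ \<open>visit P u \<noteq> 0\<close>, of M] u
    by (simp add: cond_edge_def add_divide_distrib[symmetric])
qed

lemma support_cond_edge:
  assumes valid: "valid_reachable P" and bounded: "unit_bounded P M"
    and "expect (Some P) M \<noteq> 1"
  shows "support (P\<lparr>edge := cond_edge P M\<rparr>) = {l \<in> support P. M l \<noteq> 1}"
proof -
  have pos: "0 < 1 - expect (Some P) M" using assms expect_le_one[OF valid bounded] by simp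
  have "0 < visit (P\<lparr>edge := cond_edge P M\<rparr>) l \<longleftrightarrow> 0 < visit P l \<and> M l \<noteq> 1"
    if l: "length l = rounds P" for l
  proof -
    have "visit (P\<lparr>edge := cond_edge P M\<rparr>) l = visit P l * (1 - M l) / (1 - expect (Some P) M)"
      using visit_cond_edge[OF valid bounded, of l] l pos
      by (simp add: expect_under_leaf eq_divide_eq)
    moreover have "0 \<le> visit P l" "M l \<le> 1"
      using visit_nonneg[OF valid] bounded l by (auto simp: unit_bounded_def)
    ultimately show ?thesis
      using pos by (auto simp: zero_less_divide_iff zero_less_mult_iff)
  qed
  then show ?thesis by (auto simp: support_def leaves_def)
qed

definition proto_equiv :: "proto \<Rightarrow> proto \<Rightarrow> bool" where
  "proto_equiv P Q \<longleftrightarrow> rounds P = rounds Q \<and>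
    (\<forall>u. length u < rounds P \<longrightarrow> ctrlA P u = ctrlA Q u \<and> edge P u = edge Q u) \<and>
    (\<forall>l. length l = rounds P \<longrightarrow> out P l = out Q l)"

lemma proto_equiv_visit:
  assumes "proto_equiv P Q" "length u \<le> rounds P"
  shows "visit P u = visit Q u"
  unfolding visit_def
proof (rule prod.cong)
  fix i assume "i \<in> {..<length u}"
  then show "edge P (take i u) (u ! i) = edge Q (take i u) (u ! i)"
    using assms by (simp add: proto_equiv_def)
qed simp

lemma proto_equiv_expect:
  assumes "proto_equiv P Q" "\<And>l. length l = rounds P \<Longrightarrow> M l = N l"
  shows "expect (Some P) M = expect (Some Q) N"
proof -
  have "leaves Q = leaves P" using assms(1) by (simp add: proto_equiv_def leaves_def)
  then show ?thesis
    unfolding expect.simps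
    by (intro sum.cong) (use assms proto_equiv_visit in \<open>auto simp: leaves_def\<close>)
qed

lemma proto_equiv_child:
  "proto_equiv P Q \<Longrightarrow> 0 < rounds P \<Longrightarrow> proto_equiv (shift P [c]) (shift Q [c])"
  by (auto simp: proto_equiv_def)

lemma proto_equiv_domm:
  "proto_equiv P Q \<Longrightarrow> rounds P = n \<Longrightarrow> length l = n \<Longrightarrow> domm isA n P l = domm isA n Q l"
proof (induction n arbitrary: P Q l)
  case 0
  then show ?case by (simp add: proto_equiv_def)
next
  case (Suc n)
  obtain c v where l: "l = c # v" using Suc.prems(3) by (cases l) auto
  have equiv: "proto_equiv (shift P [d]) (shift Q [d])" for d
    using proto_equiv_child[OF Suc.prems(1)] Suc.prems(2) by simp
  have child: "domm isA n (shift P [d]) w = domm isA n (shift Q [d]) w" if "length w = n" for d w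
    using Suc.IH[OF equiv _ that] Suc.prems(2) by simp
  have root: "edge P [] = edge Q []" "ctrlA P [] = ctrlA Q []"
    using Suc.prems by (auto simp: proto_equiv_def)
  have "expect (Some (shift P [d])) (domm isA n (shift P [d])) =
      expect (Some (shift Q [d])) (domm isA n (shift Q [d]))" for d
    by (rule proto_equiv_expect[OF equiv]) (use child Suc.prems(2) in simp)
  then have "dom_mean isA n P d = dom_mean isA n Q d" for d
    by (simp add: dom_mean_def root)
  then have "dom_factor isA n P c = dom_factor isA n Q c"
    by (simp add: dom_factor_def root)
  then show ?case using child[of v] Suc.prems(3) l by (simp add: domm_Cons)
qed

lemma proto_equiv_expect_domm:
  "proto_equiv P Q \<Longrightarrow> expect (Some P) (domm isA (rounds P) P) = expect (Some Q) (domm isA (rounds Q) Q)"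
  using proto_equiv_expect[of P Q] proto_equiv_domm[of P Q] by (simp add: proto_equiv_def)

lemma cond_edge_equiv:
  assumes valid: "valid_reachable P" and bounded: "unit_bounded P M"
    and "expect (Some P) M = 0"
  shows "proto_equiv P (P\<lparr>edge := cond_edge P M\<rparr>)"
proof -
  have zero: "length u \<le> rounds P \<Longrightarrow> expect_under (Some P) u M = 0" for u
  proof (induction u rule: rev_induct)
    case (snoc b u)
    then have "edge P u b * expect_under (Some P) (u @ [b]) M = 0"
      using edge_expect_under_eq_zero[OF valid bounded] by simp
    then show ?case
      by (cases "visit P (u @ [b]) = 0") (auto simp: expect_under_unvisited visit_snoc)
  qed (simp add: assms(3))
  have "cond_edge P M u = edge P u" if "length u < rounds P" for u
    using zero[of u] zero[of "u @ [_]"] that by (auto simp: cond_edge_def)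
  then show ?thesis by (simp add: proto_equiv_def)
qed

lemma cond_proto_support:
  assumes "valid_reachable P" "unit_bounded P M" "expect (Some P) M \<noteq> 1"
  obtains P' where "cond_proto (Some P) M = Some P'" "valid_reachable P'"
    "support P' = {l \<in> support P. M l \<noteq> 1}" "expect (Some P) M = 0 \<Longrightarrow> proto_equiv P P'"
  using that[OF cond_proto_Some[OF assms(3)] valid_reachable_cond_edge[OF assms]
      support_cond_edge[OF assms] cond_edge_equiv[OF assms(1,2)]] .

lemma unit_bounded_domm: "valid_reachable P \<Longrightarrow> unit_bounded P (domm isA (rounds P) P)"
  using domm_bounds by (simp add: unit_bounded_def)

lemma round_shrinks_support:
  assumes valid: "valid_reachable P"
    and A: "expect (Some P) (dom_meas True (Some P)) \<noteq> 1"
    and B: "expect (condA (Some P)) (dom_meas False (condA (Some P))) \<noteq> 1"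
  obtains P' where "condB (condA (Some P)) = Some P'" "valid_reachable P'"
    "support P' \<subset> support P"
proof -
  let ?MA = "domm True (rounds P) P"
  obtain Q where Q: "cond_proto (Some P) ?MA = Some Q" "valid_reachable Q"
      "support Q = {l \<in> support P. ?MA l \<noteq> 1}" "expect (Some P) ?MA = 0 \<Longrightarrow> proto_equiv P Q"
    using cond_proto_support[OF valid unit_bounded_domm[OF valid]] A by auto
  then have condA: "condA (Some P) = Some Q" by (simp add: condA_def)
  let ?MB = "domm False (rounds Q) Q"
  obtain P' where P': "cond_proto (Some Q) ?MB = Some P'" "valid_reachable P'"
      "support P' = {l \<in> support Q. ?MB l \<noteq> 1}"
    using cond_proto_support[OF Q(2) unit_bounded_domm[OF Q(2)]] B condA by auto
  have "\<exists>l\<in>support P. ?MA l = 1 \<or> l \<in> support Q \<and> ?MB l = 1"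
  proof (cases "0 < expect (Some P) ?MA")
    case True
    then show ?thesis using domm_eq_one_on_support[OF valid refl] by blast
  next
    case False
    moreover have "0 \<le> expect (Some P) ?MA"
      by (rule expect_nonneg[OF valid]) (use domm_bounds[OF valid refl] in blast)
    ultimately have "expect (Some P) ?MA = 0" by simp
    then have "expect (Some Q) (domm True (rounds Q) Q) = 0"
      using proto_equiv_expect_domm[OF Q(4)] by simp
    then have "0 < expect (Some Q) ?MB" using expect_domm_pos[OF Q(2) refl] by simp
    then show ?thesis using domm_eq_one_on_support[OF Q(2) refl] Q(3) by blast
  qed
  then have "support P' \<subset> support P" using Q(3) P'(3) by blast
  with that P' condA show thesis by (simp add: condB_def)
qed

lemma seqA_Suc_right: "seqA X (Suc j) = seqA (condB (condA X)) j"
  by (induction j) simp_all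

lemma seq_dom_meas_eq_one:
  assumes "valid_reachable P"
  shows "\<exists>j. expect (seqA (Some P) j) (dom_meas True (seqA (Some P) j)) = 1
           \<or> expect (seqB (Some P) j) (dom_meas False (seqB (Some P) j)) = 1"
  using assms
proof (induction "card (support P)" arbitrary: P rule: less_induct)
  case less
  show ?case
  proof (cases "expect (Some P) (dom_meas True (Some P)) = 1 \<or>
      expect (condA (Some P)) (dom_meas False (condA (Some P))) = 1")
    case True
    then show ?thesis by (intro exI[of _ 0]) (simp add: seqB_def)
  next
    case False
    then obtain P' where "condB (condA (Some P)) = Some P'" "valid_reachable P'"
        "support P' \<subset> support P"
      using round_shrinks_support[OF less.prems] by blast
    moreover from this have "card (support P') < card (support P)"
      by (simp add: psubset_card_mono finite_support)
    ultimately obtain j where "expect (seqA (Some P') j) (dom_meas True (seqA (Some P') j)) = 1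
        \<or> expect (seqB (Some P') j) (dom_meas False (seqB (Some P') j)) = 1"
      using less.hyps by blast
    with \<open>condB (condA (Some P)) = Some P'\<close> show ?thesis
      by (intro exI[of _ "Suc j"]) (simp add: seqB_def seqA_Suc_right del: seqA.simps)
  qed
qed

theorem lemma3p44:
  fixes P :: proto
  assumes "valid_proto P"
  shows "\<exists>j. expect (seqA (Some P) j) (dom_meas True (seqA (Some P) j)) = 1
           \<or> expect (seqB (Some P) j) (dom_meas False (seqB (Some P) j)) = 1"
  using seq_dom_meas_eq_one[OF valid_proto_imp_valid_reachable[OF assms]] .

end
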